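(* Let $D\in\mathbb{N}$ and $r\in\{1,\dots,D\}$. For $\mu>0$ let $Y_\mu\sim\mathrm{Pois}_\mu^{(r,D)}$ and $Y'_\mu\sim\mathrm{Pois}_\mu^{(D-r+1,D)}$. Then both limits $\lim_{\mu\to\infty}\mathbb{D}[Y_\mu]$ and $\lim_{\mu\to\infty}\mathbb{D}[Y'_\mu]$ exist and are equal.
   Context: $\mathrm{Pois}_\mu^{(r,D)}$ is the law of the $r$-th smallest of $D$ i.i.d. Poisson($\mu$) random variables. For a nonnegative random variable $Y$ with positive finite mean, the index of dispersion is $\mathbb{D}[Y]=\operatorname{Var}(Y)/\mathbb{E}[Y]$. *)

theory Defs
  imports "HOL-Probability.Probability"
begin

definition order_stat :: "nat \<Rightarrow> nat \<Rightarrow> (nat \<Rightarrow> nat) \<Rightarrow> nat" where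
  "order_stat r D x = sort (map x [0..<D]) ! (r - 1)"

definition pois_order_pmf :: "real \<Rightarrow> nat \<Rightarrow> nat \<Rightarrow> nat pmf" where
  "pois_order_pmf \<mu> r D =
     map_pmf (order_stat r D) (Pi_pmf {..<D} 0 (\<lambda>_. poisson_pmf \<mu>))"

definition dispersion :: "nat pmf \<Rightarrow> real" where
  "dispersion p = measure_pmf.variance p real / measure_pmf.expectation p real"

end

theory Submission
  imports Defs
begin

text \<open>Write \<open>Z = (Y - \<mu>)/\<surd>\<mu>\<close>. The \<open>r\<close>-th smallest of \<open>D\<close> values is at most \<open>c\<close> iff at least \<open>r\<close> of
  them are, so \<open>P(Y \<le> c)\<close> is the upper tail \<open>P(Bin(D, F\<^sub>\<mu>(c)) \<ge> r)\<close>, where \<open>F\<^sub>\<mu>\<close> is the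
  Poisson cdf. By the central limit theorem for the Poisson law, \<open>Z\<close> converges in distribution to the
  law with cdf \<open>P(Bin(D, \<Phi>(x)) \<ge> r)\<close>. The fourth moment of \<open>Z\<close> is at most \<open>D\<close> times that of a
  standardized Poisson variable, hence bounded, so the first two moments of \<open>Z\<close> converge too, and the
  index of dispersion \<open>Var Z / (1 + E Z/\<surd>\<mu>)\<close> tends to the variance of the limit law. Finally
  \<open>\<Phi>(-x) = 1 - \<Phi>(x)\<close> and complementing the binomial tail show that the limit law for \<open>D - r + 1\<close>
  is the reflection of the one for \<open>r\<close>, which has the same variance.\<close>

lemma summable_pmf_integral:
  fixes p :: "nat pmf" and f :: "nat \<Rightarrow> 'b::{banach, second_countable_topology}"
  assumes "summable (\<lambda>k. norm (pmf p k *\<^sub>R f k))"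
  shows "integrable p f" "(\<lambda>k. pmf p k *\<^sub>R f k) sums (\<integral>x. f x \<partial>p)"
proof -
  have int: "integrable (count_space UNIV) (\<lambda>k. pmf p k *\<^sub>R f k)"
    using assms by (simp add: integrable_count_space_nat_iff)
  then show "integrable p f"
    by (simp add: measure_pmf_eq_density integrable_density)
  have "(\<integral>x. f x \<partial>p) = (\<integral>k. pmf p k *\<^sub>R f k \<partial>count_space UNIV)"
    by (simp add: measure_pmf_eq_density integral_density)
  then show "(\<lambda>k. pmf p k *\<^sub>R f k) sums (\<integral>x. f x \<partial>p)"
    using sums_integral_count_space_nat[OF int] by simp
qed

lemma summable_pmf_poisson:
  assumes "\<mu> > 0"
  shows "summable (pmf (poisson_pmf \<mu>))"
proof -
  have "(\<lambda>k. \<mu> ^ k / fact k) sums exp \<mu>"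
    using exp_converges[of \<mu>] by (simp add: divide_inverse mult.commute)
  then have "summable (\<lambda>k. \<mu> ^ k / fact k * exp (-\<mu>))"
    by (intro summable_mult2) (simp add: sums_iff)
  moreover have "pmf (poisson_pmf \<mu>) = (\<lambda>k. \<mu> ^ k / fact k * exp (-\<mu>))"
    using assms by (simp add: fun_eq_iff)
  ultimately show ?thesis by simp
qed

subsection \<open>The fourth central moment of the Poisson distribution\<close>

definition falling_factorial :: "nat \<Rightarrow> nat \<Rightarrow> real" where
  "falling_factorial j k = (\<Prod>i<j. real k - real i)"

lemma falling_factorial_0 [simp]: "falling_factorial 0 k = 1"
  by (simp add: falling_factorial_def)

lemma falling_factorial_eq_0: "k < j \<Longrightarrow> falling_factorial j k = 0"
  unfolding falling_factorial_def by (rule prod_zero) auto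

lemma falling_factorial_mult_fact: "falling_factorial j (k + j) * fact k = fact (k + j)"
proof (induction j arbitrary: k)
  case 0
  then show ?case by simp
next
  case (Suc j)
  have "falling_factorial (Suc j) (k + Suc j) = falling_factorial j (Suc k + j) * (real k + 1)"
    unfolding falling_factorial_def by (simp add: lessThan_Suc algebra_simps)
  then have "falling_factorial (Suc j) (k + Suc j) * fact k = falling_factorial j (Suc k + j) * fact (Suc k)"
    by (simp add: algebra_simps)
  also have "\<dots> = fact (k + Suc j)"
    using Suc[of "Suc k"] by simp
  finally show ?case .
qed

lemma poisson_falling_factorial_moment:
  "(\<lambda>k. \<mu> ^ k / fact k * exp (-\<mu>) * falling_factorial j k) sums (\<mu> ^ j)"
proof -
  have "(\<lambda>k. \<mu> ^ k / fact k) sums exp \<mu>"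
    using exp_converges[of \<mu>] by (simp add: divide_inverse mult.commute)
  then have "(\<lambda>k. \<mu> ^ j * exp (-\<mu>) * (\<mu> ^ k / fact k)) sums (\<mu> ^ j * exp (-\<mu>) * exp \<mu>)"
    by (intro sums_mult)
  then have "(\<lambda>k. \<mu> ^ j * exp (-\<mu>) * (\<mu> ^ k / fact k)) sums (\<mu> ^ j)"
    by (simp add: exp_minus field_simps)
  moreover have "\<mu> ^ (k + j) / fact (k + j) * exp (-\<mu>) * falling_factorial j (k + j)
      = \<mu> ^ j * exp (-\<mu>) * (\<mu> ^ k / fact k)" for k
  proof -
    have fact_eq: "fact (k + j) = falling_factorial j (k + j) * (fact k :: real)"
      using falling_factorial_mult_fact[of j k] by simp
    then have "falling_factorial j (k + j) \<noteq> 0"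
      by (metis fact_nonzero mult_zero_left)
    then show ?thesis
      unfolding fact_eq by (simp add: field_simps power_add)
  qed
  ultimately have "(\<lambda>k. \<mu> ^ (k + j) / fact (k + j) * exp (-\<mu>) * falling_factorial j (k + j)) sums (\<mu> ^ j)"
    by simp
  then show ?thesis
    by (subst (asm) sums_iff_shift) (simp add: falling_factorial_eq_0)
qed

lemma central_fourth_power_falling_factorial:
  "(real k - \<mu>) ^ 4 = falling_factorial 4 k + (6 - 4*\<mu>) * falling_factorial 3 k
     + (7 - 12*\<mu> + 6*\<mu>^2) * falling_factorial 2 k
     + (1 - 4*\<mu> + 6*\<mu>^2 - 4*\<mu>^3) * falling_factorial 1 k + \<mu>^4"
  unfolding falling_factorial_def
  by (simp add: numeral_eq_Suc lessThan_Suc power2_eq_square power3_eq_cube power4_eq_xxxx algebra_simps)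

lemma poisson_central_fourth_moment:
  assumes "\<mu> > 0"
  shows "integrable (poisson_pmf \<mu>) (\<lambda>k. (real k - \<mu>) ^ 4)"
    and "(\<integral>k. (real k - \<mu>) ^ 4 \<partial>poisson_pmf \<mu>) = 3 * \<mu>^2 + \<mu>"
proof -
  let ?t = "\<lambda>k. \<mu> ^ k / fact k * exp (-\<mu>)"
  let ?c = "\<lambda>j k. ?t k * falling_factorial j k"
  have "(\<lambda>k. ?c 4 k + (6 - 4*\<mu>) * ?c 3 k + (7 - 12*\<mu> + 6*\<mu>^2) * ?c 2 k
       + (1 - 4*\<mu> + 6*\<mu>^2 - 4*\<mu>^3) * ?c 1 k + \<mu>^4 * ?c 0 k) sums
      (\<mu>^4 + (6 - 4*\<mu>) * \<mu>^3 + (7 - 12*\<mu> + 6*\<mu>^2) * \<mu>^2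
       + (1 - 4*\<mu> + 6*\<mu>^2 - 4*\<mu>^3) * \<mu>^1 + \<mu>^4 * \<mu>^0)"
    by (intro sums_add sums_mult poisson_falling_factorial_moment)
  also have "\<mu>^4 + (6 - 4*\<mu>) * \<mu>^3 + (7 - 12*\<mu> + 6*\<mu>^2) * \<mu>^2
       + (1 - 4*\<mu> + 6*\<mu>^2 - 4*\<mu>^3) * \<mu>^1 + \<mu>^4 * \<mu>^0 = 3 * \<mu>^2 + \<mu>"
    by (simp add: power2_eq_square power3_eq_cube power4_eq_xxxx algebra_simps)
  also have "(\<lambda>k. ?c 4 k + (6 - 4*\<mu>) * ?c 3 k + (7 - 12*\<mu> + 6*\<mu>^2) * ?c 2 k
       + (1 - 4*\<mu> + 6*\<mu>^2 - 4*\<mu>^3) * ?c 1 k + \<mu>^4 * ?c 0 k)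
      = (\<lambda>k. pmf (poisson_pmf \<mu>) k *\<^sub>R (real k - \<mu>) ^ 4)"
    by (rule ext, subst central_fourth_power_falling_factorial) (simp add: assms field_simps)
  finally have sums: "(\<lambda>k. pmf (poisson_pmf \<mu>) k *\<^sub>R (real k - \<mu>) ^ 4) sums (3 * \<mu>^2 + \<mu>)" .
  then have summable: "summable (\<lambda>k. norm (pmf (poisson_pmf \<mu>) k *\<^sub>R (real k - \<mu>) ^ 4))"
    by (simp add: sums_iff abs_mult)
  show "integrable (poisson_pmf \<mu>) (\<lambda>k. (real k - \<mu>) ^ 4)"
    by (rule summable_pmf_integral(1)[OF summable])
  show "(\<integral>k. (real k - \<mu>) ^ 4 \<partial>poisson_pmf \<mu>) = 3 * \<mu>^2 + \<mu>"
    using summable_pmf_integral(2)[OF summable] sums sums_unique2 by blast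
qed

subsection \<open>Central limit theorem for the Poisson distribution\<close>

definition poisson_std :: "real \<Rightarrow> real measure" where
  "poisson_std \<mu> = distr (measure_pmf (poisson_pmf \<mu>)) borel (\<lambda>k. (real k - \<mu>) / sqrt \<mu>)"

definition poisson_cdf :: "real \<Rightarrow> real \<Rightarrow> real" where
  "poisson_cdf \<mu> c = measure_pmf.prob (poisson_pmf \<mu>) {k. real k \<le> c}"

lemma cdf_poisson_std:
  assumes "\<mu> > 0"
  shows "cdf (poisson_std \<mu>) x = poisson_cdf \<mu> (\<mu> + sqrt \<mu> * x)"
proof -
  have "(\<lambda>k. (real k - \<mu>) / sqrt \<mu>) -` {..x} = {k. real k \<le> \<mu> + sqrt \<mu> * x}"
    using assms by (auto simp: pos_divide_le_eq algebra_simps)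
  then show ?thesis
    unfolding cdf_def poisson_std_def poisson_cdf_def by (subst measure_distr) auto
qed

lemma real_distribution_poisson_std: "real_distribution (poisson_std \<mu>)"
  unfolding poisson_std_def
  by (intro prob_space.real_distribution_distr) (auto simp: measure_pmf.prob_space_axioms)

lemma char_poisson_std:
  assumes "\<mu> > 0"
  shows "char (poisson_std \<mu>) t = exp (of_real \<mu> * (iexp (t / sqrt \<mu>) - 1) - \<i> * of_real (t * sqrt \<mu>))"
proof -
  let ?s = "t / sqrt \<mu>"
  let ?a = "exp (- of_real \<mu>) * iexp (- ?s * \<mu>)"
  have term_eq: "pmf (poisson_pmf \<mu>) k *\<^sub>R iexp (t * ((real k - \<mu>) / sqrt \<mu>))
      = ?a * ((of_real \<mu> * iexp ?s) ^ k /\<^sub>R fact k)" for k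
  proof -
    have "iexp (t * ((real k - \<mu>) / sqrt \<mu>)) = iexp (- ?s * \<mu>) * iexp ?s ^ k"
      by (simp add: exp_of_nat_mult[symmetric] exp_add[symmetric] algebra_simps diff_divide_distrib)
    then show ?thesis using assms
      by (simp add: scaleR_conv_of_real power_mult_distrib exp_of_real[symmetric] field_simps)
  qed
  have sums: "(\<lambda>k. pmf (poisson_pmf \<mu>) k *\<^sub>R iexp (t * ((real k - \<mu>) / sqrt \<mu>)))
      sums (?a * exp (of_real \<mu> * iexp ?s))"
    unfolding term_eq by (intro sums_mult exp_converges)
  have summable: "summable (\<lambda>k. norm (pmf (poisson_pmf \<mu>) k *\<^sub>R iexp (t * ((real k - \<mu>) / sqrt \<mu>))))"
    using summable_pmf_poisson[OF assms] by (simp add: norm_exp_i_times)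
  then have "(\<integral>k. iexp (t * ((real k - \<mu>) / sqrt \<mu>)) \<partial>poisson_pmf \<mu>) = ?a * exp (of_real \<mu> * iexp ?s)"
    using summable_pmf_integral(2)[OF summable] sums sums_unique2 by blast
  moreover have "?a * exp (of_real \<mu> * iexp ?s) = exp (of_real \<mu> * (iexp ?s - 1) - \<i> * of_real (t * sqrt \<mu>))"
  proof -
    have "?s * \<mu> = t * sqrt \<mu>"
      using assms by (simp add: field_simps)
    then show ?thesis
      by (simp add: exp_add[symmetric] algebra_simps)
  qed
  ultimately show ?thesis
    unfolding char_def poisson_std_def by (subst integral_distr) auto
qed

lemma char_poisson_std_exponent_error:
  assumes "\<mu> > 0"
  shows "norm (of_real \<mu> * (iexp (t / sqrt \<mu>) - 1) - \<i> * of_real (t * sqrt \<mu>) + of_real (t^2 / 2))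
    \<le> \<bar>t\<bar>^3 / (6 * sqrt \<mu>)"
proof -
  let ?s = "t / sqrt \<mu>"
  have scale: "\<mu> * ?s = t * sqrt \<mu>"
    using assms by (simp add: field_simps)
  have lin: "of_real \<mu> * (\<i> * of_real ?s) = \<i> * of_real (t * sqrt \<mu>)"
    by (simp flip: scale)
  have quad: "of_real \<mu> * ((\<i> * of_real ?s)^2 / 2) = - of_real (t^2 / 2)"
    using assms by (simp add: field_simps power2_eq_square flip: of_real_mult)
  have "of_real \<mu> * (iexp ?s - 1) - \<i> * of_real (t * sqrt \<mu>) + of_real (t^2 / 2)
      = of_real \<mu> * (iexp ?s - (\<Sum>k\<le>2. (\<i> * ?s)^k / fact k))"
    using lin quad by (simp add: numeral_2_eq_2 atMost_Suc algebra_simps)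
  also have "norm \<dots> = \<mu> * cmod (iexp ?s - (\<Sum>k\<le>2. (\<i> * ?s)^k / fact k))"
    using assms by (simp add: norm_mult)
  also have "\<dots> \<le> \<mu> * (\<bar>?s\<bar>^3 / fact 3)"
    using iexp_approx1[of ?s 2] assms by (intro mult_left_mono) (auto simp: numeral_3_eq_3)
  also have "\<dots> = \<bar>t\<bar>^3 / (6 * sqrt \<mu>)"
  proof -
    have "sqrt \<mu> ^ 3 = \<mu> * sqrt \<mu>"
      using assms by (simp add: power3_eq_cube)
    then show ?thesis
      using assms by (simp add: power_divide abs_div fact_numeral field_simps)
  qed
  finally show ?thesis .
qed

lemma char_poisson_std_tendsto:
  "((\<lambda>\<mu>. char (poisson_std \<mu>) t) \<longlongrightarrow> complex_of_real (exp (- (t^2) / 2))) at_top"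
proof -
  define g where "g \<mu> = of_real \<mu> * (iexp (t / sqrt \<mu>) - 1) - \<i> * of_real (t * sqrt \<mu>)" for \<mu>
  define L :: complex where "L = - of_real (t^2 / 2)"
  have "((\<lambda>\<mu>. \<bar>t\<bar>^3 / 6 * inverse (sqrt \<mu>)) \<longlongrightarrow> \<bar>t\<bar>^3 / 6 * 0) at_top"
    by (intro tendsto_mult tendsto_const tendsto_inverse_0_at_top sqrt_at_top)
  then have "((\<lambda>\<mu>. \<bar>t\<bar>^3 / (6 * sqrt \<mu>)) \<longlongrightarrow> 0) at_top"
    by (simp add: field_simps)
  moreover have "eventually (\<lambda>\<mu>. norm (g \<mu> - L) \<le> \<bar>t\<bar>^3 / (6 * sqrt \<mu>)) at_top"
    using char_poisson_std_exponent_error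
    by (intro eventually_at_top_linorderI[of 1]) (simp add: g_def L_def)
  ultimately have "((\<lambda>\<mu>. g \<mu> - L) \<longlongrightarrow> 0) at_top"
    by (rule Lim_null_comparison[rotated])
  then have "((\<lambda>\<mu>. exp (g \<mu>)) \<longlongrightarrow> exp L) at_top"
    by (intro tendsto_exp) (simp add: LIM_zero_iff)
  moreover have "exp L = complex_of_real (exp (- (t^2) / 2))"
    unfolding L_def by (simp add: exp_of_real[symmetric])
  moreover have "eventually (\<lambda>\<mu>. exp (g \<mu>) = char (poisson_std \<mu>) t) at_top"
    by (intro eventually_at_top_linorderI[of 1]) (simp add: char_poisson_std g_def)
  ultimately show ?thesis
    by (simp add: tendsto_cong)
qed

lemma weak_conv_poisson_std:
  assumes "filterlim X at_top sequentially"
  shows "weak_conv_m (\<lambda>n. poisson_std (X n)) std_normal_distribution"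
proof (rule levy_continuity)
  fix t
  show "(\<lambda>n. char (poisson_std (X n)) t) \<longlonglongrightarrow> char std_normal_distribution t"
    unfolding char_std_normal_distribution
    using filterlim_compose[OF char_poisson_std_tendsto assms] by simp
qed (auto intro: real_distribution_poisson_std real_dist_normal_dist)


subsection \<open>The standard normal distribution function\<close>

abbreviation std_normal_cdf :: "real \<Rightarrow> real" where
  "std_normal_cdf \<equiv> cdf std_normal_distribution"

interpretation std_normal: real_distribution std_normal_distribution
  by (fact real_dist_normal_dist)

lemma std_normal_cdf_nonneg: "0 \<le> std_normal_cdf x"
  and std_normal_cdf_le_1: "std_normal_cdf x \<le> 1"
  using std_normal.cdf_nonneg std_normal.cdf_bounded_prob by auto

lemma measure_std_normal_singleton: "measure std_normal_distribution {x} = 0"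
proof -
  have "AE y in lborel. y \<in> {x} \<longrightarrow> ennreal (std_normal_density y) = 0"
    by (rule eventually_mono[OF AE_lborel_singleton[of x]]) simp
  then have "{x} \<in> null_sets std_normal_distribution"
    by (subst null_sets_density_iff) auto
  then show ?thesis
    by (simp add: measure_def emeasure_notin_sets null_setsD1)
qed

lemma isCont_std_normal_cdf: "isCont std_normal_cdf x"
  using std_normal.isCont_cdf measure_std_normal_singleton by simp

lemma cdf_distr_uminus:
  assumes "real_distribution M" and "isCont (cdf M) (- x)"
  shows "cdf (distr M borel uminus) x = 1 - cdf M (- x)"
proof -
  interpret M: real_distribution M by (fact assms(1))
  have "measure M {- x} = 0"
    using M.isCont_cdf assms(2) by simp
  moreover have "{..- x} = {..< - x} \<union> {- x}" by auto
  ultimately have "cdf M (- x) = measure M {..< - x}"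
    unfolding cdf_def using M.finite_measure_Union[of "{..< - x}" "{- x}"] by simp
  moreover have "cdf (distr M borel uminus) x = measure M {- x..}"
    unfolding cdf_def by (subst measure_distr) (auto intro!: arg_cong[where f="measure _"])
  moreover have "measure M {- x..} = 1 - measure M {..< - x}"
    using M.prob_compl[of "{..< - x}"] by (simp add: Compl_eq_Diff_UNIV[symmetric])
  ultimately show ?thesis by simp
qed

lemma distr_std_normal_uminus: "distr std_normal_distribution borel uminus = std_normal_distribution"
proof (rule Levy_uniqueness)
  show "real_distribution (distr std_normal_distribution borel uminus)"
    by (intro std_normal.real_distribution_distr) simp
  show "char (distr std_normal_distribution borel uminus) = char std_normal_distribution"
  proof
    fix t
    have "char (distr std_normal_distribution borel uminus) t = char std_normal_distribution (- t)"
      unfolding char_def by (subst integral_distr) auto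
    then show "char (distr std_normal_distribution borel uminus) t = char std_normal_distribution t"
      by (simp add: char_std_normal_distribution)
  qed
qed (rule real_dist_normal_dist)

lemma std_normal_cdf_uminus: "std_normal_cdf (- x) = 1 - std_normal_cdf x"
  using cdf_distr_uminus[OF real_dist_normal_dist isCont_std_normal_cdf, of "- x"]
  by (simp add: distr_std_normal_uminus)

subsection \<open>Order statistics and coin tossing\<close>

lemma sorted_nth_iff_filter:
  fixes xs :: "'a::linorder list"
  assumes "sorted xs" and "j < length xs" and down_closed: "\<And>a b. P b \<Longrightarrow> a \<le> b \<Longrightarrow> P a"
  shows "P (xs ! j) \<longleftrightarrow> j < length (filter P xs)"
  using assms(1,2)
proof (induction xs arbitrary: j)
  case Nil
  then show ?case by simp
next
  case (Cons a xs)
  have a_le: "\<forall>y\<in>set xs. a \<le> y"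
    using Cons.prems(1) by simp
  show ?case
  proof (cases "P a")
    case True
    then show ?thesis
      using Cons by (cases j) auto
  next
    case False
    then have "\<not> P y" if "y \<in> set (a # xs)" for y
      using that a_le down_closed by auto
    then show ?thesis
      using Cons.prems(2) nth_mem[of j "a # xs"] by (auto simp: filter_empty_conv)
  qed
qed

lemma order_stat_le_iff:
  assumes "1 \<le> r" and "r \<le> D"
  shows "real (order_stat r D x) \<le> c \<longleftrightarrow> r \<le> card {i\<in>{..<D}. real (x i) \<le> c}"
proof -
  let ?ys = "map x [0..<D]"
  let ?P = "\<lambda>y::nat. real y \<le> c"
  have "?P (sort ?ys ! (r - 1)) \<longleftrightarrow> r - 1 < length (filter ?P (sort ?ys))"
    by (rule sorted_nth_iff_filter) (use assms in auto)
  moreover have "length (filter ?P (sort ?ys)) = length (filter ?P ?ys)"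
    by (metis mset_filter mset_sort size_mset)
  moreover have "length (filter ?P ?ys) = card {i\<in>{..<D}. real (x i) \<le> c}"
  proof -
    have "length (filter ?P ?ys) = length (filter (\<lambda>i. real (x i) \<le> c) [0..<D])"
      by (simp add: filter_map comp_def)
    also have "\<dots> = card (set (filter (\<lambda>i. real (x i) \<le> c) [0..<D]))"
      by (rule distinct_card[symmetric]) simp
    also have "set (filter (\<lambda>i. real (x i) \<le> c) [0..<D]) = {i\<in>{..<D}. real (x i) \<le> c}"
      by auto
    finally show ?thesis .
  qed
  ultimately show ?thesis
    using assms unfolding order_stat_def by auto
qed

lemma order_stat_in_range:
  assumes "1 \<le> r" and "r \<le> D"
  shows "\<exists>i<D. order_stat r D x = x i"
proof -
  have "order_stat r D x \<in> set (sort (map x [0..<D]))"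
    unfolding order_stat_def using assms by (intro nth_mem) auto
  then show ?thesis by auto
qed

lemma map_pmf_eq_bernoulli_pmf:
  fixes f :: "'a \<Rightarrow> bool"
  shows "map_pmf f q = bernoulli_pmf (measure_pmf.prob q {x. f x})"
proof (rule pmf_eqI)
  fix b
  have "measure_pmf.prob q (f -` {False}) = 1 - measure_pmf.prob q {x. f x}"
    using measure_pmf.prob_compl[of "{x. f x}" q]
    by (simp add: vimage_def Compl_eq_Diff_UNIV[symmetric] Collect_neg_eq)
  then show "pmf (map_pmf f q) b = pmf (bernoulli_pmf (measure_pmf.prob q {x. f x})) b"
    by (cases b) (auto simp: pmf_map vimage_def)
qed

lemma measure_Pi_pmf_change_default:
  assumes "finite A" and "\<And>f g. (\<forall>i\<in>A. f i = g i) \<Longrightarrow> f \<in> E \<longleftrightarrow> g \<in> E"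
  shows "measure_pmf.prob (Pi_pmf A d p) E = measure_pmf.prob (Pi_pmf A d' p) E"
proof -
  have "Pi_pmf A d' p = map_pmf (\<lambda>f x. if x \<in> A then f x else d') (Pi_pmf A d p)"
    using Pi_pmf_default_swap[OF assms(1)] by metis
  moreover have "(\<lambda>f x. if x \<in> A then f x else d') -` E = E"
    using assms(2)[of "\<lambda>x. if x \<in> A then _ x else d'"] by auto
  ultimately show ?thesis
    by (simp add: measure_map_pmf)
qed

lemma card_lessThan_cong:
  "\<forall>i\<in>{..<D}. f i = g i \<Longrightarrow> card {i. i < D \<and> f i} = card {i. i < D \<and> g i}"
  by (rule arg_cong[where f=card]) auto

definition binom_tail :: "nat \<Rightarrow> nat \<Rightarrow> real \<Rightarrow> real" where
  "binom_tail D r p = measure_pmf.prob (Pi_pmf {..<D} False (\<lambda>_. bernoulli_pmf p))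
     {b. r \<le> card {i\<in>{..<D}. b i}}"

lemma prob_pois_order_le:
  assumes "1 \<le> r" and "r \<le> D"
  shows "measure_pmf.prob (pois_order_pmf \<mu> r D) {y. real y \<le> c} = binom_tail D r (poisson_cdf \<mu> c)"
proof -
  let ?Q = "Pi_pmf {..<D} (0::nat) (\<lambda>_. poisson_pmf \<mu>)"
  let ?E = "{b. r \<le> card {i\<in>{..<D}. b i}}"
  let ?f = "\<lambda>k::nat. real k \<le> c"
  have "measure_pmf.prob (pois_order_pmf \<mu> r D) {y. real y \<le> c}
      = measure_pmf.prob ?Q {x. real (order_stat r D x) \<le> c}"
    unfolding pois_order_pmf_def by (simp add: measure_map_pmf vimage_def)
  also have "{x. real (order_stat r D x) \<le> c} = (\<lambda>h. ?f \<circ> h) -` ?E"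
    using order_stat_le_iff[OF assms] by auto
  also have "measure_pmf.prob ?Q ((\<lambda>h. ?f \<circ> h) -` ?E) = measure_pmf.prob (map_pmf (\<lambda>h. ?f \<circ> h) ?Q) ?E"
    by (simp add: measure_map_pmf)
  also have "map_pmf (\<lambda>h. ?f \<circ> h) ?Q = Pi_pmf {..<D} (?f 0) (\<lambda>_. map_pmf ?f (poisson_pmf \<mu>))"
    by (rule Pi_pmf_map[symmetric]) auto
  also have "map_pmf ?f (poisson_pmf \<mu>) = bernoulli_pmf (poisson_cdf \<mu> c)"
    unfolding poisson_cdf_def by (rule map_pmf_eq_bernoulli_pmf)
  also have "measure_pmf.prob (Pi_pmf {..<D} (?f 0) (\<lambda>_. bernoulli_pmf (poisson_cdf \<mu> c))) ?E
      = binom_tail D r (poisson_cdf \<mu> c)"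
    unfolding binom_tail_def by (rule measure_Pi_pmf_change_default) (auto dest!: card_lessThan_cong)
  finally show ?thesis .
qed

lemma card_lessThan_Not:
  fixes h :: "nat \<Rightarrow> bool"
  shows "card {i\<in>{..<D}. \<not> h i} = D - card {i\<in>{..<D}. h i}"
proof -
  have "{i\<in>{..<D}. \<not> h i} = {..<D} - {i\<in>{..<D}. h i}" by auto
  also have "card \<dots> = D - card {i\<in>{..<D}. h i}"
    by (subst card_Diff_subset) auto
  finally show ?thesis .
qed

text \<open>Flipping every coin turns ``at least \<open>r\<close> successes'' into ``fewer than \<open>D - r + 1\<close>''.\<close>

lemma binom_tail_complement:
  assumes "1 \<le> r" and "r \<le> D" and "0 \<le> p" and "p \<le> 1"
  shows "binom_tail D (D - r + 1) (1 - p) = 1 - binom_tail D r p"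
proof -
  let ?Q = "Pi_pmf {..<D} False (\<lambda>_. bernoulli_pmf p)"
  let ?E = "{b. r \<le> card {i\<in>{..<D}. b i}}"
  let ?E' = "{b. D - r + 1 \<le> card {i\<in>{..<D}. b i}}"
  have "{x. \<not> x} = {False}" by auto
  then have "measure_pmf.prob (bernoulli_pmf p) {x. \<not> x} = 1 - p"
    using assms(3,4) by (simp add: measure_pmf_single)
  then have flip: "map_pmf Not (bernoulli_pmf p) = bernoulli_pmf (1 - p)"
    by (simp add: map_pmf_eq_bernoulli_pmf)
  have card_le: "card {i\<in>{..<D}. h i} \<le> D" for h :: "nat \<Rightarrow> bool"
    by (metis (no_types, lifting) card_lessThan card_mono finite_lessThan mem_Collect_eq subsetI)
  have "Not \<circ> h \<in> ?E' \<longleftrightarrow> h \<notin> ?E" for h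
    using assms(1,2) card_le[of h] card_lessThan_Not[of D h] by auto
  then have preimage: "(\<lambda>h. Not \<circ> h) -` ?E' = UNIV - ?E"
    by auto
  have "binom_tail D (D - r + 1) (1 - p)
      = measure_pmf.prob (Pi_pmf {..<D} True (\<lambda>_. bernoulli_pmf (1 - p))) ?E'"
    unfolding binom_tail_def by (rule measure_Pi_pmf_change_default) (auto dest!: card_lessThan_cong)
  also have "Pi_pmf {..<D} True (\<lambda>_. bernoulli_pmf (1 - p)) = map_pmf (\<lambda>h. Not \<circ> h) ?Q"
    unfolding flip[symmetric] by (rule Pi_pmf_map) auto
  also have "measure_pmf.prob (map_pmf (\<lambda>h. Not \<circ> h) ?Q) ?E' = measure_pmf.prob ?Q (UNIV - ?E)"
    by (simp only: measure_map_pmf preimage)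
  also have "\<dots> = 1 - binom_tail D r p"
    unfolding binom_tail_def using measure_pmf.prob_compl[of ?E ?Q] by simp
  finally show ?thesis .
qed

text \<open>\<open>binom_tail\<close> is meaningful only for \<open>0 \<le> p \<le> 1\<close>, since \<open>bernoulli_pmf\<close> clamps its parameter;
  the polynomial agreeing with it there is continuous everywhere.\<close>

definition at_least_true :: "nat \<Rightarrow> nat \<Rightarrow> (nat \<Rightarrow> bool) set" where
  "at_least_true D r = {b \<in> PiE_dflt {..<D} False (\<lambda>_. UNIV). r \<le> card {i\<in>{..<D}. b i}}"

definition binom_tail_poly :: "nat \<Rightarrow> nat \<Rightarrow> real \<Rightarrow> real" where
  "binom_tail_poly D r q =
     (\<Sum>b\<in>at_least_true D r. \<Prod>i<D. of_bool (b i) * q + (1 - of_bool (b i)) * (1 - q))"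

lemma finite_at_least_true: "finite (at_least_true D r)"
  unfolding at_least_true_def
  by (rule finite_subset[of _ "PiE_dflt {..<D} False (\<lambda>_. UNIV)"]) auto

lemma isCont_binom_tail_poly: "isCont (binom_tail_poly D r) q"
  unfolding binom_tail_poly_def by (intro continuous_intros)

lemma binom_tail_eq_poly:
  assumes "0 \<le> q" and "q \<le> 1"
  shows "binom_tail D r q = binom_tail_poly D r q"
proof -
  let ?Q = "Pi_pmf {..<D} False (\<lambda>_. bernoulli_pmf q)"
  let ?E = "{b. r \<le> card {i\<in>{..<D}. b i}}"
  let ?S = "PiE_dflt {..<D} False (\<lambda>_. UNIV)"
  have "set_pmf ?Q \<subseteq> ?S"
    using set_Pi_pmf_subset[of "{..<D}" False "\<lambda>_. bernoulli_pmf q"] by (auto simp: PiE_dflt_def)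
  then have "measure_pmf.prob ?Q ((?E \<inter> ?S) \<inter> set_pmf ?Q) = measure_pmf.prob ?Q (?E \<inter> set_pmf ?Q)"
    by (intro arg_cong[where f="measure _"]) auto
  moreover have "?E \<inter> ?S = at_least_true D r"
    unfolding at_least_true_def by auto
  ultimately have "binom_tail D r q = measure_pmf.prob ?Q (at_least_true D r)"
    unfolding binom_tail_def by (simp add: measure_Int_set_pmf)
  also have "\<dots> = (\<Sum>b\<in>at_least_true D r. pmf ?Q b)"
    by (rule measure_measure_pmf_finite[OF finite_at_least_true])
  also have "\<dots> = binom_tail_poly D r q"
    unfolding binom_tail_poly_def
  proof (rule sum.cong[OF refl])
    fix b assume "b \<in> at_least_true D r"
    then have "\<forall>x. x \<notin> {..<D} \<longrightarrow> b x = False"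
      unfolding at_least_true_def PiE_dflt_def by auto
    then show "pmf ?Q b = (\<Prod>i<D. of_bool (b i) * q + (1 - of_bool (b i)) * (1 - q))"
      using assms by (simp add: pmf_Pi) (intro prod.cong refl, auto)
  qed
  finally show ?thesis .
qed

lemma bernoulli_pmf_0: "bernoulli_pmf 0 = return_pmf False"
  by (rule pmf_eqI) (case_tac i, auto simp: pmf_return)

lemma bernoulli_pmf_1: "bernoulli_pmf 1 = return_pmf True"
  by (rule pmf_eqI) (case_tac i, auto simp: pmf_return)

lemma binom_tail_0: "1 \<le> r \<Longrightarrow> binom_tail D r 0 = 0"
  unfolding binom_tail_def bernoulli_pmf_0 by simp

lemma binom_tail_1: "r \<le> D \<Longrightarrow> binom_tail D r 1 = 1"
  unfolding binom_tail_def bernoulli_pmf_1 by (simp add: indicator_def)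


subsection \<open>Convergence of moments under a fourth-moment bound\<close>

lemma one_plus_square_le: "1 + x^2 \<le> 2 + (x::real)^4"
  and one_plus_square_squared_le: "(1 + x^2)^2 \<le> 2 + 2 * (x::real)^4"
proof -
  have "0 \<le> (x^2 - 1)^2" by simp
  then have "2 * x^2 \<le> 1 + x^4"
    by (simp add: power2_eq_square power4_eq_xxxx algebra_simps)
  then show "1 + x^2 \<le> 2 + x^4"
    using zero_le_power2[of x] by linarith
  show "(1 + x^2)^2 \<le> 2 + 2 * x^4"
    using \<open>2 * x^2 \<le> 1 + x^4\<close> by (simp add: power2_sum power2_eq_square power4_eq_xxxx algebra_simps)
qed

lemma abs_le_one_plus_square: "\<bar>x::real\<bar> \<le> 1 + x^2"
proof (cases "\<bar>x\<bar> \<le> 1")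
  case False
  then have "\<bar>x\<bar> * 1 \<le> \<bar>x\<bar> * \<bar>x\<bar>"
    by (intro mult_left_mono) auto
  then show ?thesis
    by (simp add: power2_eq_square abs_mult_self_eq)
qed (simp add: add_increasing2)

lemma integrable_quadratic_growth:
  fixes f :: "real \<Rightarrow> real"
  assumes "real_distribution P" and "integrable P (\<lambda>x. x^4)"
    and "\<And>x. isCont f x" and "\<And>x. \<bar>f x\<bar> \<le> 1 + x^2"
  shows "integrable P f"
proof -
  interpret P: real_distribution P by (fact assms(1))
  have [measurable]: "f \<in> borel_measurable borel"
    by (intro borel_measurable_continuous_onI continuous_at_imp_continuous_on) (simp add: assms(3))
  have "norm (f x) \<le> norm (2 + x^4)" for x
    using assms(4)[of x] one_plus_square_le[of x] by simp
  then show ?thesis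
    using assms(2) by (intro Bochner_Integration.integrable_bound[of P "\<lambda>x. 2 + x^4" f]) auto
qed

lemma fourth_moment_weak_limit:
  fixes N :: "nat \<Rightarrow> real measure"
  assumes N: "\<And>n. real_distribution (N n)" and M: "real_distribution M" and W: "weak_conv_m N M"
    and bounded: "eventually (\<lambda>n. integrable (N n) (\<lambda>x. x^4) \<and> (\<integral>x. x^4 \<partial>N n) \<le> C) sequentially"
  shows "integrable M (\<lambda>x. x^4)" and "(\<integral>x. x^4 \<partial>M) \<le> C"
proof -
  interpret M: real_distribution M by (fact M)
  define h where "h K x = min (x^4) (real K)" for K :: nat and x :: real
  have [measurable]: "h K \<in> borel_measurable borel" for K
    unfolding h_def by measurable
  have h_int: "integrable P (h K)" if "real_distribution P" for P K
  proof -
    interpret P: real_distribution P by (fact that)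
    show ?thesis
      by (rule P.integrable_const_bound[where B="real K"]) (auto simp: h_def)
  qed
  have h_le_C: "(\<integral>x. h K x \<partial>M) \<le> C" for K
  proof (rule tendsto_upperbound)
    show "(\<lambda>n. \<integral>x. h K x \<partial>N n) \<longlonglongrightarrow> (\<integral>x. h K x \<partial>M)"
      unfolding h_def
      by (rule weak_conv_imp_integral_bdd_continuous_conv[OF N M W, where B="real K"])
         (auto intro!: continuous_intros)
    show "eventually (\<lambda>n. (\<integral>x. h K x \<partial>N n) \<le> C) sequentially"
      using bounded
    proof eventually_elim
      case (elim n)
      then have "(\<integral>x. h K x \<partial>N n) \<le> (\<integral>x. x^4 \<partial>N n)"
        by (intro integral_mono h_int[OF N]) (auto simp: h_def)
      with elim show ?case by linarith
    qed
  qed simp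
  have "incseq (\<lambda>K. \<integral>x. h K x \<partial>M)"
    by (intro incseq_SucI integral_mono h_int[OF M]) (auto simp: h_def)
  then have h_lim: "(\<lambda>K. \<integral>x. h K x \<partial>M) \<longlonglongrightarrow> (SUP K. \<integral>x. h K x \<partial>M)"
    by (rule LIMSEQ_incseq_SUP[rotated]) (auto intro!: bdd_aboveI h_le_C)
  have h_pointwise: "(\<lambda>K. h K x) \<longlonglongrightarrow> x^4" for x
  proof (rule tendsto_eventually, rule eventually_sequentiallyI)
    fix K assume "nat \<lceil>x^4\<rceil> \<le> K"
    then show "h K x = x^4"
      unfolding h_def by linarith
  qed
  have h_mono: "mono (\<lambda>K. h K x)" for x
    by (auto simp: mono_def h_def intro!: min.mono)
  show "integrable M (\<lambda>x. x^4)"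
    by (rule integrable_monotone_convergence[OF h_int[OF M] _ _ h_lim]) (auto intro: h_mono h_pointwise)
  have "(\<integral>x. x^4 \<partial>M) = (SUP K. \<integral>x. h K x \<partial>M)"
    by (rule integral_monotone_convergence[OF h_int[OF M] _ _ h_lim]) (auto intro: h_mono h_pointwise)
  then show "(\<integral>x. x^4 \<partial>M) \<le> C"
    by (simp add: cSUP_least h_le_C)
qed

lemma clamp_error_le:
  fixes y x K :: real
  assumes "K > 0" and "\<bar>y\<bar> \<le> 1 + x^2"
  shows "\<bar>y - max (-K) (min K y)\<bar> \<le> (2 + 2 * x^4) / K"
proof (cases "\<bar>y\<bar> \<le> K")
  case True
  then have "max (-K) (min K y) = y" by auto
  then show ?thesis
    using assms by simp
next
  case False
  have "\<bar>y - max (-K) (min K y)\<bar> \<le> \<bar>y\<bar>"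
    using False assms(1) by (auto simp: abs_if max_def min_def)
  also have "\<dots> \<le> \<bar>y\<bar> * \<bar>y\<bar> / K"
  proof -
    have "\<bar>y\<bar> * K \<le> \<bar>y\<bar> * \<bar>y\<bar>"
      using False by (intro mult_left_mono) auto
    then show ?thesis
      using assms(1) by (simp add: pos_le_divide_eq)
  qed
  also have "\<bar>y\<bar> * \<bar>y\<bar> \<le> (1 + x^2) * (1 + x^2)"
    using assms(2) by (intro mult_mono) auto
  also have "\<dots> \<le> 2 + 2 * x^4"
    using one_plus_square_squared_le[of x] by (simp add: power2_eq_square)
  finally show ?thesis
    using assms(1) by (simp add: divide_right_mono)
qed

lemma integral_clamp_error_le:
  fixes f :: "real \<Rightarrow> real"
  assumes P: "real_distribution P" and fourth: "integrable P (\<lambda>x. x^4)" "(\<integral>x. x^4 \<partial>P) \<le> c"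
    and K: "K > 0" and f: "\<And>x. isCont f x" "\<And>x. \<bar>f x\<bar> \<le> 1 + x^2"
  shows "\<bar>(\<integral>x. f x \<partial>P) - (\<integral>x. max (-K) (min K (f x)) \<partial>P)\<bar> \<le> (2 + 2 * c) / K"
proof -
  interpret P: real_distribution P by (fact P)
  have int_f: "integrable P f"
    by (rule integrable_quadratic_growth[OF P fourth(1) f])
  have [measurable]: "f \<in> borel_measurable borel"
    by (intro borel_measurable_continuous_onI continuous_at_imp_continuous_on) (simp add: f)
  have int_clamp: "integrable P (\<lambda>x. max (-K) (min K (f x)))"
    by (rule P.integrable_const_bound[where B=K]) (use K in auto)
  have "\<bar>(\<integral>x. f x \<partial>P) - (\<integral>x. max (-K) (min K (f x)) \<partial>P)\<bar>
      = \<bar>\<integral>x. f x - max (-K) (min K (f x)) \<partial>P\<bar>"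
    using int_f int_clamp by simp
  also have "\<dots> \<le> (\<integral>x. \<bar>f x - max (-K) (min K (f x))\<bar> \<partial>P)"
    by (rule integral_abs_bound)
  also have "\<dots> \<le> (\<integral>x. (2 + 2 * x^4) / K \<partial>P)"
    using int_f int_clamp fourth(1) K f(2) by (intro integral_mono clamp_error_le) auto
  also have "\<dots> = (2 + 2 * (\<integral>x. x^4 \<partial>P)) / K"
    using fourth(1) P.prob_space by simp
  also have "\<dots> \<le> (2 + 2 * c) / K"
    using fourth(2) K by (simp add: divide_right_mono)
  finally show ?thesis .
qed

text \<open>Clamping \<open>f\<close> at level \<open>K\<close> costs at most \<open>O(1/K)\<close>, uniformly in \<open>n\<close> by the fourth-moment bound,
  and weak convergence handles the clamped function, which is bounded and continuous.\<close>

lemma weak_conv_integral_tendsto: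
  fixes N :: "nat \<Rightarrow> real measure" and f :: "real \<Rightarrow> real"
  assumes N: "\<And>n. real_distribution (N n)" and M: "real_distribution M" and W: "weak_conv_m N M"
    and bounded: "eventually (\<lambda>n. integrable (N n) (\<lambda>x. x^4) \<and> (\<integral>x. x^4 \<partial>N n) \<le> C) sequentially"
    and f: "\<And>x. isCont f x" "\<And>x. \<bar>f x\<bar> \<le> 1 + x^2"
  shows "(\<lambda>n. \<integral>x. f x \<partial>N n) \<longlonglongrightarrow> (\<integral>x. f x \<partial>M)"
proof (rule tendstoI)
  fix e :: real assume e: "e > 0"
  have C_nonneg: "0 \<le> C"
  proof -
    obtain n where "(\<integral>x. x^4 \<partial>N n) \<le> C"
      using bounded by (auto simp: eventually_sequentially)
    moreover have "0 \<le> (\<integral>x. x^4 \<partial>N n)"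
      by (intro integral_nonneg_AE AE_I2) (simp add: zero_le_even_power)
    ultimately show ?thesis by linarith
  qed
  define K :: real where "K = 3 * (2 + 2 * C) / e + 1"
  have K: "K > 0"
    unfolding K_def using C_nonneg e by (simp add: add_pos_nonneg)
  have "3 * (2 + 2 * C) < e * K"
    unfolding K_def using e by (simp add: field_simps)
  then have K_small: "(2 + 2 * C) / K < e / 3"
    using K e by (simp add: field_simps)
  let ?g = "\<lambda>x. max (-K) (min K (f x))"
  have "(\<lambda>n. \<integral>x. ?g x \<partial>N n) \<longlonglongrightarrow> (\<integral>x. ?g x \<partial>M)"
    by (rule weak_conv_imp_integral_bdd_continuous_conv[OF N M W, where B=K])
       (use K in \<open>auto intro!: continuous_intros f(1)\<close>)
  then have close: "eventually (\<lambda>n. dist (\<integral>x. ?g x \<partial>N n) (\<integral>x. ?g x \<partial>M) < e / 3) sequentially"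
    using e by (intro tendstoD) auto
  have limit_error: "\<bar>(\<integral>x. f x \<partial>M) - (\<integral>x. ?g x \<partial>M)\<bar> \<le> (2 + 2 * C) / K"
    using fourth_moment_weak_limit[OF N M W bounded] by (intro integral_clamp_error_le[OF M _ _ K f])
  have "eventually (\<lambda>n. \<bar>(\<integral>x. f x \<partial>N n) - (\<integral>x. ?g x \<partial>N n)\<bar> \<le> (2 + 2 * C) / K) sequentially"
    using bounded by eventually_elim (intro integral_clamp_error_le[OF N _ _ K f], auto)
  then show "eventually (\<lambda>n. dist (\<integral>x. f x \<partial>N n) (\<integral>x. f x \<partial>M) < e) sequentially"
    using close
  proof eventually_elim
    case (elim n)
    then show ?case
      using limit_error K_small unfolding dist_real_def by linarith
  qed
qed


subsection \<open>The limit law of the standardized order statistic\<close>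

definition order_stat_std :: "real \<Rightarrow> nat \<Rightarrow> nat \<Rightarrow> real measure" where
  "order_stat_std \<mu> r D = distr (measure_pmf (pois_order_pmf \<mu> r D)) borel (\<lambda>y. (real y - \<mu>) / sqrt \<mu>)"

definition order_stat_limit_cdf :: "nat \<Rightarrow> nat \<Rightarrow> real \<Rightarrow> real" where
  "order_stat_limit_cdf D r x = binom_tail D r (std_normal_cdf x)"

definition order_stat_limit :: "nat \<Rightarrow> nat \<Rightarrow> real measure" where
  "order_stat_limit D r = interval_measure (order_stat_limit_cdf D r)"

lemma real_distribution_order_stat_std: "real_distribution (order_stat_std \<mu> r D)"
  unfolding order_stat_std_def
  by (intro prob_space.real_distribution_distr) (auto simp: measure_pmf.prob_space_axioms)

lemma cdf_order_stat_std:
  assumes "\<mu> > 0" and "1 \<le> r" and "r \<le> D"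
  shows "cdf (order_stat_std \<mu> r D) x = binom_tail D r (poisson_cdf \<mu> (\<mu> + sqrt \<mu> * x))"
proof -
  have "(\<lambda>y. (real y - \<mu>) / sqrt \<mu>) -` {..x} = {y. real y \<le> \<mu> + sqrt \<mu> * x}"
    using assms(1) by (auto simp: pos_divide_le_eq algebra_simps)
  then show ?thesis
    unfolding cdf_def order_stat_std_def
    by (subst measure_distr) (auto simp: prob_pois_order_le[OF assms(2,3)])
qed

lemma order_stat_limit_cdf_eq_poly:
  "order_stat_limit_cdf D r x = binom_tail_poly D r (std_normal_cdf x)"
  unfolding order_stat_limit_cdf_def
  by (intro binom_tail_eq_poly std_normal_cdf_nonneg std_normal_cdf_le_1)

lemma isCont_order_stat_limit_cdf: "isCont (order_stat_limit_cdf D r) x"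
  unfolding order_stat_limit_cdf_eq_poly[abs_def]
  by (rule isCont_o2[OF isCont_std_normal_cdf isCont_binom_tail_poly])

lemma cdf_order_stat_std_tendsto:
  assumes X: "filterlim X at_top sequentially" and r: "1 \<le> r" "r \<le> D"
  shows "(\<lambda>n. cdf (order_stat_std (X n) r D) x) \<longlonglongrightarrow> order_stat_limit_cdf D r x"
proof -
  have "(\<lambda>n. cdf (poisson_std (X n)) x) \<longlonglongrightarrow> std_normal_cdf x"
    using weak_conv_poisson_std[OF X] isCont_std_normal_cdf
    unfolding weak_conv_m_def weak_conv_def by blast
  then have "(\<lambda>n. binom_tail_poly D r (cdf (poisson_std (X n)) x)) \<longlonglongrightarrow> order_stat_limit_cdf D r x"
    unfolding order_stat_limit_cdf_eq_poly by (rule isCont_tendsto_compose[OF isCont_binom_tail_poly])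
  moreover have "eventually (\<lambda>n. X n > 0) sequentially"
    using X by (simp add: filterlim_at_top_dense)
  then have "eventually (\<lambda>n. binom_tail_poly D r (cdf (poisson_std (X n)) x)
      = cdf (order_stat_std (X n) r D) x) sequentially"
  proof eventually_elim
    case (elim n)
    interpret W: real_distribution "poisson_std (X n)"
      by (rule real_distribution_poisson_std)
    show ?case
      using elim r W.cdf_nonneg W.cdf_bounded_prob
      by (simp add: cdf_order_stat_std cdf_poisson_std binom_tail_eq_poly)
  qed
  ultimately show ?thesis
    by (simp add: tendsto_cong)
qed

text \<open>Monotonicity of the limit is inherited from the cdfs along \<open>\<mu> = n\<close>.\<close>

lemma order_stat_limit_cdf_mono:
  assumes "1 \<le> r" and "r \<le> D" and "x \<le> y"
  shows "order_stat_limit_cdf D r x \<le> order_stat_limit_cdf D r y"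
proof (rule LIMSEQ_le)
  show "(\<lambda>n. cdf (order_stat_std (real n) r D) x) \<longlonglongrightarrow> order_stat_limit_cdf D r x"
    and "(\<lambda>n. cdf (order_stat_std (real n) r D) y) \<longlonglongrightarrow> order_stat_limit_cdf D r y"
    using assms(1,2) by (auto intro: cdf_order_stat_std_tendsto filterlim_real_sequentially)
  show "\<exists>N. \<forall>n\<ge>N. cdf (order_stat_std (real n) r D) x \<le> cdf (order_stat_std (real n) r D) y"
    using finite_borel_measure.cdf_nondecreasing[OF
        real_distribution.finite_borel_measure_M[OF real_distribution_order_stat_std]] assms(3)
    by blast
qed

lemma order_stat_limit_cdf_at_bot:
  assumes "1 \<le> r"
  shows "(order_stat_limit_cdf D r \<longlongrightarrow> 0) at_bot"
proof -
  have "((\<lambda>x. binom_tail_poly D r (std_normal_cdf x)) \<longlongrightarrow> binom_tail_poly D r 0) at_bot"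
    by (rule isCont_tendsto_compose[OF isCont_binom_tail_poly std_normal.cdf_lim_at_bot])
  moreover have "binom_tail_poly D r 0 = 0"
    using binom_tail_0[OF assms] binom_tail_eq_poly[of 0 D r] by simp
  ultimately show ?thesis
    by (simp add: order_stat_limit_cdf_eq_poly[abs_def])
qed

lemma order_stat_limit_cdf_at_top:
  assumes "r \<le> D"
  shows "(order_stat_limit_cdf D r \<longlongrightarrow> 1) at_top"
proof -
  have "((\<lambda>x. binom_tail_poly D r (std_normal_cdf x)) \<longlongrightarrow> binom_tail_poly D r 1) at_top"
    by (rule isCont_tendsto_compose[OF isCont_binom_tail_poly std_normal.cdf_lim_at_top_prob])
  moreover have "binom_tail_poly D r 1 = 1"
    using binom_tail_1[OF assms] binom_tail_eq_poly[of 1 D r] by simp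
  ultimately show ?thesis
    by (simp add: order_stat_limit_cdf_eq_poly[abs_def])
qed

lemma real_distribution_order_stat_limit:
  assumes "1 \<le> r" and "r \<le> D"
  shows "real_distribution (order_stat_limit D r)"
    and "cdf (order_stat_limit D r) = order_stat_limit_cdf D r"
proof -
  have mono: "\<And>x y. x \<le> y \<Longrightarrow> order_stat_limit_cdf D r x \<le> order_stat_limit_cdf D r y"
    using order_stat_limit_cdf_mono[OF assms] by blast
  have right_cont: "\<And>a. continuous (at_right a) (order_stat_limit_cdf D r)"
    using isCont_order_stat_limit_cdf continuous_at_imp_continuous_at_within by blast
  show "real_distribution (order_stat_limit D r)"
    unfolding order_stat_limit_def
    by (rule real_distribution_interval_measure[OF mono right_cont
          order_stat_limit_cdf_at_bot order_stat_limit_cdf_at_top]) (use assms in auto)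
  show "cdf (order_stat_limit D r) = order_stat_limit_cdf D r"
    unfolding order_stat_limit_def
    by (rule cdf_interval_measure[OF mono right_cont order_stat_limit_cdf_at_bot]) (use assms in auto)
qed

lemma weak_conv_order_stat_std:
  assumes "filterlim X at_top sequentially" and "1 \<le> r" and "r \<le> D"
  shows "weak_conv_m (\<lambda>n. order_stat_std (X n) r D) (order_stat_limit D r)"
  unfolding weak_conv_m_def weak_conv_def real_distribution_order_stat_limit(2)[OF assms(2,3)]
  using cdf_order_stat_std_tendsto[OF assms] by blast

lemma order_stat_limit_reflect:
  assumes "1 \<le> r" and "r \<le> D"
  shows "order_stat_limit D (D - r + 1) = distr (order_stat_limit D r) borel uminus"
proof (rule cdf_unique)
  have r': "1 \<le> D - r + 1" "D - r + 1 \<le> D"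
    using assms by auto
  interpret M: real_distribution "order_stat_limit D r"
    by (rule real_distribution_order_stat_limit(1)[OF assms])
  show "real_distribution (order_stat_limit D (D - r + 1))"
    by (rule real_distribution_order_stat_limit(1)[OF r'])
  show "real_distribution (distr (order_stat_limit D r) borel uminus)"
    by (rule M.real_distribution_distr) simp
  show "cdf (order_stat_limit D (D - r + 1)) = cdf (distr (order_stat_limit D r) borel uminus)"
  proof
    fix x
    have "cdf (order_stat_limit D (D - r + 1)) x = binom_tail D (D - r + 1) (1 - std_normal_cdf (- x))"
      using real_distribution_order_stat_limit(2)[OF r']
      by (simp add: order_stat_limit_cdf_def std_normal_cdf_uminus)
    also have "\<dots> = 1 - order_stat_limit_cdf D r (- x)"
      unfolding order_stat_limit_cdf_def
      by (intro binom_tail_complement assms std_normal_cdf_nonneg std_normal_cdf_le_1)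
    also have "\<dots> = cdf (distr (order_stat_limit D r) borel uminus) x"
      using cdf_distr_uminus[OF M.real_distribution_axioms, of x] isCont_order_stat_limit_cdf
      by (simp add: real_distribution_order_stat_limit(2)[OF assms])
    finally show "cdf (order_stat_limit D (D - r + 1)) x = cdf (distr (order_stat_limit D r) borel uminus) x" .
  qed
qed

subsection \<open>Moments and the index of dispersion\<close>

lemma poisson_std_fourth_moment_le:
  assumes "\<mu> \<ge> 1"
  shows "integrable (poisson_pmf \<mu>) (\<lambda>k. ((real k - \<mu>) / sqrt \<mu>) ^ 4)"
    and "(\<integral>k. ((real k - \<mu>) / sqrt \<mu>) ^ 4 \<partial>poisson_pmf \<mu>) \<le> 4"
proof -
  have \<mu>: "\<mu> > 0"
    using assms by simp
  have "sqrt \<mu> ^ 4 = (sqrt \<mu> ^ 2) ^ 2"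
    by (simp flip: power_mult)
  also have "\<dots> = \<mu>^2"
    using \<mu> by simp
  finally have eq: "((real k - \<mu>) / sqrt \<mu>) ^ 4 = (real k - \<mu>) ^ 4 / \<mu>^2" for k
    by (simp add: power_divide)
  have "(3 * \<mu>^2 + \<mu>) / \<mu>^2 \<le> 4"
    using assms \<mu> by (simp add: divide_le_eq power2_eq_square)
  then show "integrable (poisson_pmf \<mu>) (\<lambda>k. ((real k - \<mu>) / sqrt \<mu>) ^ 4)"
    and "(\<integral>k. ((real k - \<mu>) / sqrt \<mu>) ^ 4 \<partial>poisson_pmf \<mu>) \<le> 4"
    unfolding eq using poisson_central_fourth_moment[OF \<mu>] by simp_all
qed

lemma integral_order_stat_le:
  fixes p :: "nat pmf" and g :: "nat \<Rightarrow> real"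
  assumes "1 \<le> r" and "r \<le> D" and g_nonneg: "\<And>k. 0 \<le> g k" and int_g: "integrable p g"
  defines "Q \<equiv> Pi_pmf {..<D} 0 (\<lambda>_. p)"
  shows "integrable Q (\<lambda>f. g (order_stat r D f))"
    and "(\<integral>f. g (order_stat r D f) \<partial>Q) \<le> real D * (\<integral>k. g k \<partial>p)"
proof -
  have component: "map_pmf (\<lambda>f. f i) Q = p" if "i < D" for i
    unfolding Q_def using Pi_pmf_component[of "{..<D}" i 0 "\<lambda>_. p"] that by simp
  have int_i: "integrable Q (\<lambda>f. g (f i))" if "i < D" for i
    using int_g integrable_map_pmf_eq[of "\<lambda>f. f i" Q g] component[OF that] by simp
  have int_sum: "integrable Q (\<lambda>f. \<Sum>i<D. g (f i))"
    using int_i by (intro Bochner_Integration.integrable_sum) auto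
  have stat_le_sum: "g (order_stat r D f) \<le> (\<Sum>i<D. g (f i))" for f
  proof -
    obtain j where "j < D" "order_stat r D f = f j"
      using order_stat_in_range[OF assms(1,2)] by blast
    then show ?thesis
      using g_nonneg by (auto intro: member_le_sum)
  qed
  show int_stat: "integrable Q (\<lambda>f. g (order_stat r D f))"
    by (rule Bochner_Integration.integrable_bound[OF int_sum])
       (use stat_le_sum g_nonneg in \<open>auto intro!: AE_I2 simp: abs_of_nonneg sum_nonneg\<close>)
  have "(\<integral>f. g (order_stat r D f) \<partial>Q) \<le> (\<integral>f. (\<Sum>i<D. g (f i)) \<partial>Q)"
    using int_stat int_sum stat_le_sum by (intro integral_mono) auto
  also have "\<dots> = (\<Sum>i<D. \<integral>k. g k \<partial>p)"
  proof -
    have "(\<integral>f. g (f i) \<partial>Q) = (\<integral>k. g k \<partial>p)" if "i < D" for i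
      using integral_map_pmf[of "\<lambda>f. f i" Q g] component[OF that] by simp
    then show ?thesis
      using int_i by (simp add: Bochner_Integration.integral_sum)
  qed
  finally show "(\<integral>f. g (order_stat r D f) \<partial>Q) \<le> real D * (\<integral>k. g k \<partial>p)"
    by simp
qed

lemma fourth_moment_order_stat_std:
  assumes "\<mu> \<ge> 1" and "1 \<le> r" and "r \<le> D"
  shows "integrable (order_stat_std \<mu> r D) (\<lambda>x. x^4) \<and> (\<integral>x. x^4 \<partial>order_stat_std \<mu> r D) \<le> 4 * real D"
proof -
  let ?Q = "Pi_pmf {..<D} (0::nat) (\<lambda>_. poisson_pmf \<mu>)"
  define g where "g k = ((real k - \<mu>) / sqrt \<mu>) ^ 4" for k :: nat
  note poisson = poisson_std_fourth_moment_le[OF assms(1), folded g_def]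
  have g_nonneg: "0 \<le> g k" for k
    by (simp add: g_def zero_le_even_power)
  note stat = integral_order_stat_le[OF assms(2,3) g_nonneg poisson(1)]
  have "integrable (order_stat_std \<mu> r D) (\<lambda>x. x^4) \<longleftrightarrow> integrable ?Q (\<lambda>f. g (order_stat r D f))"
    unfolding order_stat_std_def pois_order_pmf_def g_def by (subst integrable_distr_eq) auto
  moreover have "(\<integral>x. x^4 \<partial>order_stat_std \<mu> r D) = (\<integral>f. g (order_stat r D f) \<partial>?Q)"
    unfolding order_stat_std_def pois_order_pmf_def g_def by (subst integral_distr) auto
  moreover have "real D * (\<integral>k. g k \<partial>poisson_pmf \<mu>) \<le> real D * 4"
    using poisson(2) by (intro mult_left_mono) auto
  ultimately show ?thesis
    using stat by simp
qed

lemma (in prob_space) variance_add_mult: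
  fixes U :: "'a \<Rightarrow> real"
  assumes "integrable M U"
  shows "variance (\<lambda>x. a + b * U x) = b^2 * variance U"
proof -
  have "(a + b * U x - expectation (\<lambda>x. a + b * U x))^2 = b^2 * (U x - expectation U)^2" for x
    using assms by (simp add: prob_space power2_eq_square algebra_simps)
  then show ?thesis
    by simp
qed

text \<open>With \<open>Z = (Y - \<mu>)/\<surd>\<mu>\<close> we have \<open>E Y = \<mu> + \<surd>\<mu> E Z\<close> and \<open>Var Y = \<mu> Var Z\<close>.\<close>

lemma dispersion_order_stat_std:
  assumes \<mu>: "\<mu> > 0" and fourth: "integrable (order_stat_std \<mu> r D) (\<lambda>x. x^4)"
  defines "m \<equiv> \<integral>x. x \<partial>order_stat_std \<mu> r D" and "s \<equiv> \<integral>x. x^2 \<partial>order_stat_std \<mu> r D"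
  shows "dispersion (pois_order_pmf \<mu> r D) = (s - m^2) / (1 + m / sqrt \<mu>)"
proof -
  let ?p = "pois_order_pmf \<mu> r D"
  define u where "u y = (real y - \<mu>) / sqrt \<mu>" for y :: nat
  have real_eq: "real = (\<lambda>y. \<mu> + sqrt \<mu> * u y)"
    using \<mu> by (simp add: fun_eq_iff u_def field_simps)
  have "integrable (order_stat_std \<mu> r D) (\<lambda>x. x)" "integrable (order_stat_std \<mu> r D) (\<lambda>x. x^2)"
    using abs_le_one_plus_square
    by (auto intro!: integrable_quadratic_growth[OF real_distribution_order_stat_std fourth])
  then have int_u: "integrable ?p u" and int_u2: "integrable ?p (\<lambda>y. (u y)^2)"
    unfolding order_stat_std_def u_def by (simp_all add: integrable_distr_eq)
  have m: "m = (\<integral>y. u y \<partial>?p)" and s: "s = (\<integral>y. (u y)^2 \<partial>?p)"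
    unfolding m_def s_def order_stat_std_def u_def by (simp_all add: integral_distr)
  have "measure_pmf.expectation ?p real = (\<integral>y. \<mu> + sqrt \<mu> * u y \<partial>?p)"
    by (simp only: real_eq)
  also have "\<dots> = \<mu> + sqrt \<mu> * m"
    using int_u m by simp
  finally have expectation: "measure_pmf.expectation ?p real = \<mu> + sqrt \<mu> * m" .
  have "measure_pmf.variance ?p real = measure_pmf.variance ?p (\<lambda>y. \<mu> + sqrt \<mu> * u y)"
    by (simp only: real_eq)
  also have "\<dots> = (sqrt \<mu>)^2 * measure_pmf.variance ?p u"
    by (rule measure_pmf.variance_add_mult[OF int_u])
  also have "\<dots> = \<mu> * (s - m^2)"
    using \<mu> int_u int_u2 by (simp add: measure_pmf.variance_eq m s)
  finally have "measure_pmf.variance ?p real = \<mu> * (s - m^2)" .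
  moreover note expectation
  moreover have "\<mu> + sqrt \<mu> * m = \<mu> * (1 + m / sqrt \<mu>)"
    using \<mu> by (simp add: field_simps)
  ultimately show ?thesis
    unfolding dispersion_def using \<mu> by simp
qed

lemma dispersion_pois_order_tendsto:
  assumes "1 \<le> r" and "r \<le> D"
  defines "M \<equiv> order_stat_limit D r"
  shows "((\<lambda>\<mu>. dispersion (pois_order_pmf \<mu> r D)) \<longlongrightarrow> (\<integral>x. x^2 \<partial>M) - (\<integral>x. x \<partial>M)^2) at_top"
proof (rule tendsto_at_topI_sequentially)
  fix X :: "nat \<Rightarrow> real"
  assume X: "filterlim X at_top sequentially"
  let ?N = "\<lambda>n. order_stat_std (X n) r D"
  have X_ge_1: "eventually (\<lambda>n. X n \<ge> 1) sequentially"
    using X by (simp add: filterlim_at_top)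
  then have bounded: "eventually (\<lambda>n. integrable (?N n) (\<lambda>x. x^4) \<and> (\<integral>x. x^4 \<partial>?N n) \<le> 4 * real D) sequentially"
    by eventually_elim (rule fourth_moment_order_stat_std[OF _ assms(1,2)])
  note moment_tendsto = weak_conv_integral_tendsto[OF real_distribution_order_stat_std
      real_distribution_order_stat_limit(1)[OF assms(1,2)] weak_conv_order_stat_std[OF X assms(1,2)] bounded]
  have m: "(\<lambda>n. \<integral>x. x \<partial>?N n) \<longlonglongrightarrow> (\<integral>x. x \<partial>M)"
    unfolding M_def by (rule moment_tendsto) (auto simp: abs_le_one_plus_square)
  have s: "(\<lambda>n. \<integral>x. x^2 \<partial>?N n) \<longlonglongrightarrow> (\<integral>x. x^2 \<partial>M)"
    unfolding M_def by (rule moment_tendsto) auto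
  have inverse_sqrt: "(\<lambda>n. inverse (sqrt (X n))) \<longlonglongrightarrow> 0"
    by (rule tendsto_inverse_0_at_top[OF filterlim_compose[OF sqrt_at_top X]])
  have "(\<lambda>n. ((\<integral>x. x^2 \<partial>?N n) - (\<integral>x. x \<partial>?N n)^2) / (1 + (\<integral>x. x \<partial>?N n) * inverse (sqrt (X n))))
      \<longlonglongrightarrow> ((\<integral>x. x^2 \<partial>M) - (\<integral>x. x \<partial>M)^2) / (1 + (\<integral>x. x \<partial>M) * 0)"
    by (intro tendsto_intros m s inverse_sqrt) simp
  moreover have "eventually (\<lambda>n. ((\<integral>x. x^2 \<partial>?N n) - (\<integral>x. x \<partial>?N n)^2) / (1 + (\<integral>x. x \<partial>?N n) * inverse (sqrt (X n)))
      = dispersion (pois_order_pmf (X n) r D)) sequentially"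
    using bounded X_ge_1 by eventually_elim (simp add: dispersion_order_stat_std divide_inverse)
  ultimately show "(\<lambda>n. dispersion (pois_order_pmf (X n) r D)) \<longlonglongrightarrow> (\<integral>x. x^2 \<partial>M) - (\<integral>x. x \<partial>M)^2"
    by (simp add: tendsto_cong)
qed

theorem mainTheorem2:
  fixes D r :: nat
  assumes "1 \<le> r" and "r \<le> D"
  shows "\<exists>L::real.
           ((\<lambda>\<mu>. dispersion (pois_order_pmf \<mu> r D)) \<longlongrightarrow> L) at_top \<and>
           ((\<lambda>\<mu>. dispersion (pois_order_pmf \<mu> (D - r + 1) D)) \<longlongrightarrow> L) at_top"
proof -
  let ?M = "order_stat_limit D r" and ?M' = "order_stat_limit D (D - r + 1)"
  interpret M: real_distribution ?M
    by (rule real_distribution_order_stat_limit(1)[OF assms])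
  have "(\<integral>x. x^2 \<partial>?M') = (\<integral>x. x^2 \<partial>?M)" and "(\<integral>x. x \<partial>?M') = - (\<integral>x. x \<partial>?M)"
    unfolding order_stat_limit_reflect[OF assms] by (subst integral_distr; simp)+
  moreover have "D - r + 1 \<le> D"
    using assms by simp
  ultimately show ?thesis
    using dispersion_pois_order_tendsto[OF assms] dispersion_pois_order_tendsto[of "D - r + 1" D] by auto
qed


end
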